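(* CTL*$_{cd}$ has a tree-like model property: every satisfiable CTL*$_{cd}$ state formula $\varphi$ is satisfied (i.e. $\mathcal K\models\varphi$) by some Kripke structure $\mathcal K$ that is a tree with back edges.
   Context: A Kripke structure over a finite set $AP$ of atomic propositions is a tuple $\mathcal K=(AP,W,R,L,w_I)$ where $W$ is a countable non-empty set of worlds, $w_I\in W$ is the initial world, $R\subseteq W\times W$ is a left-total transition relation (every world has at least one $R$-successor), and $L:W\to 2^{AP}$ is a labelling function. A path is an infinite sequence $\pi=\pi_0\pi_1\cdots$ of worlds with $(\pi_i,\pi_{i+1})\in R$ for all $i\in\mathbb N$; $\mathrm{Pth}(w)$ is the set of paths with $\pi_0=w$. A path $\pi$ is a cycle if for every $i\in\mathbb N$ there is $j>i$ with $\pi_j=\pi_0$ (i.e. $\pi_0$ occurs infinitely often in $\pi$); $\mathrm{Cyc}(w)$ is the set of cycles with $\pi_0=w$. Syntax of CTL*$_{cd}$: state formulas $\varphi::=p\mid\neg\varphi\mid\varphi\wedge\varphi\mid\varphi\vee\varphi\mid \mathsf E\psi\mid\mathsf A\psi\mid\mathsf E^{c}\psi\mid\mathsf A^{c}\psi$ with $p\in AP$; path formulas $\psi::=\varphi\mid\neg\psi\mid\psi\wedge\psi\mid\psi\vee\psi\mid\mathsf X\psi\mid\psi\,\mathsf U\,\psi$. Semantics: $\mathcal K,w\models p$ iff $p\in L(w)$; Boolean connectives as usual; $\mathcal K,w\models\mathsf E\psi$ iff some $\pi\in\mathrm{Pth}(w)$ has $\mathcal K,\pi,0\models\psi$; $\mathcal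 K,w\models\mathsf A\psi$ iff every $\pi\in\mathrm{Pth}(w)$ has $\mathcal K,\pi,0\models\psi$; $\mathcal K,w\models\mathsf E^{c}\psi$ iff some $\pi\in\mathrm{Cyc}(w)$ has $\mathcal K,\pi,0\models\psi$; $\mathcal K,w\models\mathsf A^{c}\psi$ iff every $\pi\in\mathrm{Cyc}(w)$ has $\mathcal K,\pi,0\models\psi$. For paths: $\mathcal K,\pi,i\models\varphi$ (state formula) iff $\mathcal K,\pi_i\models\varphi$; Boolean connectives as usual; $\mathcal K,\pi,i\models\mathsf X\psi$ iff $\mathcal K,\pi,i+1\models\psi$; $\mathcal K,\pi,i\models\psi_1\mathsf U\psi_2$ iff there is $k\ge0$ with $\mathcal K,\pi,i+k\models\psi_2$ and $\mathcal K,\pi,i+j\models\psi_1$ for all $0\le j<k$. $\mathcal K\models\varphi$ iff $\mathcal K,w_I\models\varphi$. A state formula is satisfiable if $\mathcal K\models\varphi$ for some Kripke structure $\mathcal K$. A Kripke structure $\mathcal K=(AP,W,R,L,w_I)$ is a tree with back edges if there exist a relation $R_0\subseteq W\times W$ and a partial map $f:W\to W$ such that: (i) $(W,R_0)$ is a tree with root $w_I$ ($R_0$ being the child relation); (ii) $R=R_0\cup\{(w,f(w)) : w\in\mathrm{dom}(f)\}$; (iii) for every $w\in\mathrm{dom}(f)$, $f(w)$ is an ancestor of $w$ in the tree, i.e. $(f(w),w)\in R_0^+$ (with $R_0^+$ the transitive closure of $R_0$); (iv) for all $w_1,w_2\in W$, if $f(w_1)$ is defined and $(f(w_2),w_1)\in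 R_0^+$ and $(w_1,w_2)\in R_0^+$, then $f(w_1)=f(w_2)$. *)

theory Defs
  imports "HOL-Library.Countable_Set"
begin

record ('a, 'w) kripke =
  AP :: "'a set"
  W  :: "'w set"
  R  :: "('w \<times> 'w) set"
  L  :: "'w \<Rightarrow> 'a set"
  wI :: 'w

definition is_kripke :: "('a, 'w) kripke \<Rightarrow> bool" where
  "is_kripke K \<longleftrightarrow>
     finite (AP K) \<and> countable (W K) \<and> W K \<noteq> {} \<and> wI K \<in> W K \<and>
     R K \<subseteq> W K \<times> W K \<and>
     (\<forall>w\<in>W K. \<exists>v. (w, v) \<in> R K) \<and>
     (\<forall>w\<in>W K. L K w \<subseteq> AP K)"

definition Pth :: "('a, 'w) kripke \<Rightarrow> 'w \<Rightarrow> (nat \<Rightarrow> 'w) set" where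
  "Pth K w = {\<pi>. \<pi> 0 = w \<and> (\<forall>i. (\<pi> i, \<pi> (Suc i)) \<in> R K)}"

definition is_cycle :: "(nat \<Rightarrow> 'w) \<Rightarrow> bool" where
  "is_cycle \<pi> \<longleftrightarrow> (\<forall>i. \<exists>j>i. \<pi> j = \<pi> 0)"

definition Cyc :: "('a, 'w) kripke \<Rightarrow> 'w \<Rightarrow> (nat \<Rightarrow> 'w) set" where
  "Cyc K w = {\<pi> \<in> Pth K w. is_cycle \<pi>}"

datatype 'a sform =
    Prop 'a
  | SNot "'a sform"
  | SAnd "'a sform" "'a sform"
  | SOr "'a sform" "'a sform"
  | Ex "'a pform"
  | All "'a pform"
  | ExC "'a pform"
  | AllC "'a pform"
and 'a pform =
    State "'a sform"
  | PNot "'a pform"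
  | PAnd "'a pform" "'a pform"
  | POr "'a pform" "'a pform"
  | Next "'a pform"
  | Until "'a pform" "'a pform"

primrec sat_s :: "('a, 'w) kripke \<Rightarrow> 'w \<Rightarrow> 'a sform \<Rightarrow> bool"
and sat_p :: "('a, 'w) kripke \<Rightarrow> (nat \<Rightarrow> 'w) \<Rightarrow> nat \<Rightarrow> 'a pform \<Rightarrow> bool" where
  "sat_s K w (Prop p) = (p \<in> L K w)"
| "sat_s K w (SNot \<phi>) = (\<not> sat_s K w \<phi>)"
| "sat_s K w (SAnd \<phi>1 \<phi>2) = (sat_s K w \<phi>1 \<and> sat_s K w \<phi>2)"
| "sat_s K w (SOr \<phi>1 \<phi>2) = (sat_s K w \<phi>1 \<or> sat_s K w \<phi>2)"
| "sat_s K w (Ex \<psi>) = (\<exists>\<pi>\<in>Pth K w. sat_p K \<pi> 0 \<psi>)"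
| "sat_s K w (All \<psi>) = (\<forall>\<pi>\<in>Pth K w. sat_p K \<pi> 0 \<psi>)"
| "sat_s K w (ExC \<psi>) = (\<exists>\<pi>\<in>Cyc K w. sat_p K \<pi> 0 \<psi>)"
| "sat_s K w (AllC \<psi>) = (\<forall>\<pi>\<in>Cyc K w. sat_p K \<pi> 0 \<psi>)"
| "sat_p K \<pi> i (State \<phi>) = sat_s K (\<pi> i) \<phi>"
| "sat_p K \<pi> i (PNot \<psi>) = (\<not> sat_p K \<pi> i \<psi>)"
| "sat_p K \<pi> i (PAnd \<psi>1 \<psi>2) = (sat_p K \<pi> i \<psi>1 \<and> sat_p K \<pi> i \<psi>2)"
| "sat_p K \<pi> i (POr \<psi>1 \<psi>2) = (sat_p K \<pi> i \<psi>1 \<or> sat_p K \<pi> i \<psi>2)"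
| "sat_p K \<pi> i (Next \<psi>) = sat_p K \<pi> (Suc i) \<psi>"
| "sat_p K \<pi> i (Until \<psi>1 \<psi>2) =
     (\<exists>k. sat_p K \<pi> (i + k) \<psi>2 \<and> (\<forall>j<k. sat_p K \<pi> (i + j) \<psi>1))"

definition models :: "('a, 'w) kripke \<Rightarrow> 'a sform \<Rightarrow> bool" where
  "models K \<phi> \<longleftrightarrow> sat_s K (wI K) \<phi>"

definition is_tree :: "'w set \<Rightarrow> ('w \<times> 'w) set \<Rightarrow> 'w \<Rightarrow> bool" where
  "is_tree V R0 r \<longleftrightarrow>
     r \<in> V \<and> R0 \<subseteq> V \<times> V \<and>
     (\<forall>u. (u, r) \<notin> R0) \<and>
     (\<forall>w\<in>V. w \<noteq> r \<longrightarrow> (\<exists>!u. (u, w) \<in> R0)) \<and>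
     (\<forall>w\<in>V. (r, w) \<in> R0\<^sup>*)"

definition tree_with_back_edges :: "('a, 'w) kripke \<Rightarrow> bool" where
  "tree_with_back_edges K \<longleftrightarrow>
    (\<exists>R0 (f :: 'w \<rightharpoonup> 'w).
       is_tree (W K) R0 (wI K) \<and>
       R K = R0 \<union> {(w, the (f w)) | w. w \<in> dom f} \<and>
       (\<forall>w\<in>dom f. (the (f w), w) \<in> R0\<^sup>+) \<and>
       (\<forall>w1 w2. w1 \<in> dom f \<longrightarrow> w2 \<in> dom f \<longrightarrow>
          (the (f w2), w1) \<in> R0\<^sup>+ \<longrightarrow> (w1, w2) \<in> R0\<^sup>+ \<longrightarrow> f w1 = f w2))"

end

theory Submission
  imports Defs
begin

text \<open>Unfold K into a tree whose nodes are the finite paths of K. A plain unfolding would not do: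
  a cycle through a world becomes an infinite branch that never revisits its root, so cycle
  quantifiers could change their value. Therefore a path may open a loop, and every node inside
  the loop gets a back edge to the loop's origin whenever K has the corresponding transition.
  Projecting nodes to their last worlds preserves labels and maps the paths and the cycles from
  every node onto those of its world, so every CTL*$_{cd}$ formula keeps its truth value. All back
  edges of a loop point to its origin, which yields the nesting condition on back edges.\<close>

lemma range_Pth_subset:
  assumes "R K \<subseteq> W K \<times> W K" and "\<pi> \<in> Pth K x" and "x \<in> W K"
  shows "range \<pi> \<subseteq> W K"
proof -
  have "\<pi> i \<in> W K" for i
    using assms by (induction i) (auto simp: Pth_def)
  then show ?thesis by blast
qed

lemma comp_in_Pth:
  assumes "\<And>x y. (x, y) \<in> R K' \<Longrightarrow> (g x, g y) \<in> R K" and "\<pi> \<in> Pth K' x"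
  shows "g \<circ> \<pi> \<in> Pth K (g x)"
  using assms by (simp add: Pth_def)

lemma comp_in_Cyc:
  assumes "\<And>x y. (x, y) \<in> R K' \<Longrightarrow> (g x, g y) \<in> R K" and "\<pi> \<in> Cyc K' x"
  shows "g \<circ> \<pi> \<in> Cyc K (g x)"
proof -
  have "\<pi> \<in> Pth K' x" "is_cycle \<pi>"
    using assms(2) by (simp_all add: Cyc_def)
  moreover from \<open>is_cycle \<pi>\<close> have "is_cycle (g \<circ> \<pi>)"
    unfolding is_cycle_def by (simp, metis)
  ultimately show ?thesis
    using comp_in_Pth[of K' g K, OF assms(1)] by (simp add: Cyc_def)
qed

lemma sat_invariant_under_path_surjection:
  fixes K' :: "('a, 'v) kripke" and K :: "('a, 'w) kripke" and g :: "'v \<Rightarrow> 'w"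
  assumes closed: "R K' \<subseteq> W K' \<times> W K'"
    and labels: "\<And>x. x \<in> W K' \<Longrightarrow> L K' x = L K (g x)"
    and paths: "\<And>x. x \<in> W K' \<Longrightarrow> (\<circ>) g ` Pth K' x = Pth K (g x)"
    and cycles: "\<And>x. x \<in> W K' \<Longrightarrow> (\<circ>) g ` Cyc K' x = Cyc K (g x)"
  shows "x \<in> W K' \<Longrightarrow> sat_s K' x \<phi> \<longleftrightarrow> sat_s K (g x) \<phi>"
    and "range \<pi> \<subseteq> W K' \<Longrightarrow> sat_p K' \<pi> i \<psi> \<longleftrightarrow> sat_p K (g \<circ> \<pi>) i \<psi>"
proof (induction \<phi> and \<psi> arbitrary: x and \<pi> i)
  case (Ex \<psi>)
  then have "sat_p K' \<pi> 0 \<psi> \<longleftrightarrow> sat_p K (g \<circ> \<pi>) 0 \<psi>" if "\<pi> \<in> Pth K' x" for \<pi>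
    using range_Pth_subset[OF closed that] by blast
  then show ?case by (auto simp flip: paths[OF Ex.prems])
next
  case (All \<psi>)
  then have "sat_p K' \<pi> 0 \<psi> \<longleftrightarrow> sat_p K (g \<circ> \<pi>) 0 \<psi>" if "\<pi> \<in> Pth K' x" for \<pi>
    using range_Pth_subset[OF closed that] by blast
  then show ?case by (auto simp flip: paths[OF All.prems])
next
  case (ExC \<psi>)
  then have "sat_p K' \<pi> 0 \<psi> \<longleftrightarrow> sat_p K (g \<circ> \<pi>) 0 \<psi>" if "\<pi> \<in> Cyc K' x" for \<pi>
    using range_Pth_subset[OF closed _ ExC.prems] that unfolding Cyc_def by blast
  then show ?case by (auto simp flip: cycles[OF ExC.prems])
next
  case (AllC \<psi>)
  then have "sat_p K' \<pi> 0 \<psi> \<longleftrightarrow> sat_p K (g \<circ> \<pi>) 0 \<psi>" if "\<pi> \<in> Cyc K' x" for \<pi>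
    using range_Pth_subset[OF closed _ AllC.prems] that unfolding Cyc_def by blast
  then show ?case by (auto simp flip: cycles[OF AllC.prems])
qed (auto simp: labels)

text \<open>A node of the unfolding is a finite path of K from its initial world, stored in reverse;
  each step records the code of its world and a mark. An Open step starts a loop at the node below
  it, Inner steps stay inside that loop, and the nodes of a loop may jump back to its origin.\<close>

datatype mark = Plain | Open | Inner

instance mark :: countable
  by countable_datatype

type_synonym node = "(nat \<times> mark) list"

abbreviation code :: "node \<Rightarrow> nat" where "code \<equiv> to_nat"
abbreviation decode :: "nat \<Rightarrow> node" where "decode \<equiv> from_nat"

fun world :: "('a, 'w) kripke \<Rightarrow> node \<Rightarrow> 'w" where
  "world K [] = wI K"
| "world K (e # xs) = from_nat_into (W K) (fst e)"

fun valid_node :: "('a, 'w) kripke \<Rightarrow> node \<Rightarrow> bool" where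
  "valid_node K [] = True"
| "valid_node K (e # xs) \<longleftrightarrow> valid_node K xs \<and> (world K xs, world K (e # xs)) \<in> R K"

fun loop_origin :: "node \<Rightarrow> node option" where
  "loop_origin [] = None"
| "loop_origin ((c, Plain) # xs) = None"
| "loop_origin ((c, Open) # xs) = Some xs"
| "loop_origin ((c, Inner) # xs) = loop_origin xs"

definition back_target :: "('a, 'w) kripke \<Rightarrow> node \<Rightarrow> node option" where
  "back_target K xs =
     (case loop_origin xs of
        None \<Rightarrow> None
      | Some a \<Rightarrow> if valid_node K xs \<and> (world K xs, world K a) \<in> R K then Some a else None)"

definition tree_edges :: "('a, 'w) kripke \<Rightarrow> (nat \<times> nat) set" where
  "tree_edges K = {(code xs, code (e # xs)) | xs e. valid_node K (e # xs)}"

text \<open>The guard matters: decode is an arbitrary node outside range code.\<close>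

definition back_map :: "('a, 'w) kripke \<Rightarrow> nat \<rightharpoonup> nat" where
  "back_map K n = (if n \<in> range code then map_option code (back_target K (decode n)) else None)"

definition tree_unfolding :: "('a, 'w) kripke \<Rightarrow> ('a, nat) kripke" where
  "tree_unfolding K =
     \<lparr>AP = AP K, W = code ` Collect (valid_node K),
      R = tree_edges K \<union> {(n, the (back_map K n)) | n. n \<in> dom (back_map K)},
      L = \<lambda>n. L K (world K (decode n)), wI = code []\<rparr>"

lemma valid_node_appendD: "valid_node K (ys @ xs) \<Longrightarrow> valid_node K xs"
  by (induction ys) auto

lemma loop_origin_suffix: "loop_origin xs = Some a \<Longrightarrow> \<exists>ys. ys \<noteq> [] \<and> xs = ys @ a"
  by (induction xs rule: loop_origin.induct) (auto intro: exI[of _ "_ # _"])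

lemma loop_origin_append:
  "loop_origin (ys @ xs) = Some a \<Longrightarrow> length a < length xs \<Longrightarrow> loop_origin xs = Some a"
proof (induction ys)
  case (Cons e ys)
  then show ?case
    by (cases e rule: prod.exhaust, rename_tac m, case_tac m) auto
qed simp

lemma back_map_code: "back_map K (code xs) = map_option code (back_target K xs)"
  by (simp add: back_map_def)

lemma back_map_SomeE:
  assumes "back_map K n = Some m"
  obtains xs a where "n = code xs" "m = code a" "valid_node K xs" "loop_origin xs = Some a"
    "(world K xs, world K a) \<in> R K"
  using assms by (auto simp: back_map_def back_target_def split: if_splits option.splits)

lemma tree_edges_trancl_iff:
  "(m, n) \<in> (tree_edges K)\<^sup>+ \<longleftrightarrow>
     (\<exists>xs ys. m = code xs \<and> n = code (ys @ xs) \<and> ys \<noteq> [] \<and> valid_node K (ys @ xs))"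
proof
  assume "(m, n) \<in> (tree_edges K)\<^sup>+"
  then show "\<exists>xs ys. m = code xs \<and> n = code (ys @ xs) \<and> ys \<noteq> [] \<and> valid_node K (ys @ xs)"
  proof (induction rule: trancl_induct)
    case (base n)
    then show ?case by (force simp: tree_edges_def)
  next
    case (step n n')
    then obtain xs ys where "m = code xs" "n = code (ys @ xs)" "ys \<noteq> []" by blast
    moreover obtain e where "n' = code (e # ys @ xs)" "valid_node K (e # ys @ xs)"
      using step.hyps(2) \<open>n = code (ys @ xs)\<close> by (auto simp: tree_edges_def)
    ultimately show ?case
      by (metis append_Cons list.distinct(1))
  qed
next
  assume "\<exists>xs ys. m = code xs \<and> n = code (ys @ xs) \<and> ys \<noteq> [] \<and> valid_node K (ys @ xs)"
  then obtain xs ys where "m = code xs" "n = code (ys @ xs)" "ys \<noteq> []" "valid_node K (ys @ xs)"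
    by blast
  moreover have "ys \<noteq> [] \<Longrightarrow> valid_node K (ys @ xs) \<Longrightarrow> (code xs, code (ys @ xs)) \<in> (tree_edges K)\<^sup>+"
  proof (induction ys)
    case (Cons e ys)
    then have "valid_node K (e # ys @ xs)" by simp
    then have "(code (ys @ xs), code (e # ys @ xs)) \<in> tree_edges K"
      unfolding tree_edges_def by blast
    with Cons show ?case
      by (cases "ys = []") (auto intro: trancl_into_trancl)
  qed simp
  ultimately show "(m, n) \<in> (tree_edges K)\<^sup>+" by simp
qed

lemma is_tree_tree_edges: "is_tree (code ` Collect (valid_node K)) (tree_edges K) (code [])"
  unfolding is_tree_def
proof (intro conjI ballI impI allI)
  show "code [] \<in> code ` Collect (valid_node K)" by simp
  show "tree_edges K \<subseteq> code ` Collect (valid_node K) \<times> code ` Collect (valid_node K)"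
    by (auto simp: tree_edges_def)
  show "(u, code []) \<notin> tree_edges K" for u
    by (auto simp: tree_edges_def)
next
  fix w assume "w \<in> code ` Collect (valid_node K)" "w \<noteq> code []"
  then obtain e xs where w: "w = code (e # xs)" "valid_node K (e # xs)"
    by (auto simp: neq_Nil_conv)
  show "\<exists>!u. (u, w) \<in> tree_edges K"
  proof (rule ex1I[of _ "code xs"])
    show "(code xs, w) \<in> tree_edges K"
      using w unfolding tree_edges_def by blast
  qed (auto simp: tree_edges_def w)
next
  fix w assume "w \<in> code ` Collect (valid_node K)"
  then obtain xs where "w = code xs" "valid_node K xs" by blast
  then show "(code [], w) \<in> (tree_edges K)\<^sup>*"
    using tree_edges_trancl_iff[of "code []" w K] by (cases "xs = []") auto
qed

lemma back_map_ancestor: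
  assumes "back_map K w = Some v"
  shows "(v, w) \<in> (tree_edges K)\<^sup>+"
proof -
  obtain xs a where xs: "w = code xs" "v = code a" "valid_node K xs" "loop_origin xs = Some a"
    using assms by (rule back_map_SomeE)
  then obtain ys where "ys \<noteq> []" "xs = ys @ a"
    using loop_origin_suffix by blast
  with xs show ?thesis
    using tree_edges_trancl_iff by blast
qed

lemma back_map_nested:
  assumes "back_map K w1 = Some v1" and "back_map K w2 = Some v2"
    and "(v2, w1) \<in> (tree_edges K)\<^sup>+" and "(w1, w2) \<in> (tree_edges K)\<^sup>+"
  shows "v1 = v2"
proof -
  obtain x1 a1 where x1: "w1 = code x1" "v1 = code a1" "loop_origin x1 = Some a1"
    using assms(1) by (rule back_map_SomeE)
  obtain x2 a2 where x2: "w2 = code x2" "v2 = code a2" "loop_origin x2 = Some a2"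
    using assms(2) by (rule back_map_SomeE)
  obtain ys1 where "x1 = ys1 @ a2" "ys1 \<noteq> []"
    using assms(3) x1 x2 by (auto simp: tree_edges_trancl_iff)
  then have "length a2 < length x1" by simp
  moreover obtain ys2 where "x2 = ys2 @ x1"
    using assms(4) x1 x2 by (auto simp: tree_edges_trancl_iff)
  ultimately have "loop_origin x1 = Some a2"
    using loop_origin_append x2(3) by blast
  with x1 x2 show ?thesis by simp
qed

lemma tree_with_back_edges_tree_unfolding: "tree_with_back_edges (tree_unfolding K)"
  unfolding tree_with_back_edges_def
proof (intro exI[of _ "tree_edges K"] exI[of _ "back_map K"] conjI allI ballI impI)
  show "is_tree (W (tree_unfolding K)) (tree_edges K) (wI (tree_unfolding K))"
    using is_tree_tree_edges by (simp add: tree_unfolding_def)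
  show "R (tree_unfolding K) = tree_edges K \<union> {(w, the (back_map K w)) | w. w \<in> dom (back_map K)}"
    by (simp add: tree_unfolding_def)
  show "(the (back_map K w), w) \<in> (tree_edges K)\<^sup>+" if "w \<in> dom (back_map K)" for w
    using that back_map_ancestor by auto
  show "back_map K w1 = back_map K w2"
    if "w1 \<in> dom (back_map K)" "w2 \<in> dom (back_map K)"
      "(the (back_map K w2), w1) \<in> (tree_edges K)\<^sup>+" "(w1, w2) \<in> (tree_edges K)\<^sup>+" for w1 w2
    using that back_map_nested by auto
qed

lemma world_in_W: "is_kripke K \<Longrightarrow> world K xs \<in> W K"
  by (cases xs) (auto simp: is_kripke_def from_nat_into)

lemma tree_edge_in_R:
  assumes "valid_node K (e # xs)"
  shows "(code xs, code (e # xs)) \<in> R (tree_unfolding K)"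
proof -
  have "(code xs, code (e # xs)) \<in> tree_edges K"
    using assms unfolding tree_edges_def by blast
  then show ?thesis by (simp add: tree_unfolding_def)
qed

lemma back_edge_in_R: "back_target K xs = Some a \<Longrightarrow> (code xs, code a) \<in> R (tree_unfolding K)"
  unfolding tree_unfolding_def by (auto simp: back_map_code)

lemma R_tree_unfoldingE:
  assumes "(n, n') \<in> R (tree_unfolding K)"
  obtains xs ys where "n = code xs" "n' = code ys" "valid_node K xs" "valid_node K ys"
    "(world K xs, world K ys) \<in> R K"
proof -
  consider "(n, n') \<in> tree_edges K" | "back_map K n = Some n'"
    using assms by (auto simp: tree_unfolding_def)
  then show thesis
  proof cases
    case 1
    then show thesis
      using that by (auto simp: tree_edges_def)
  next
    case 2
    then obtain xs a where xs: "n = code xs" "n' = code a" "valid_node K xs"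
      "loop_origin xs = Some a" "(world K xs, world K a) \<in> R K"
      by (rule back_map_SomeE)
    then have "valid_node K a"
      using loop_origin_suffix valid_node_appendD by blast
    with xs that show thesis by blast
  qed
qed

lemma is_kripke_tree_unfolding:
  assumes K: "is_kripke K"
  shows "is_kripke (tree_unfolding K)"
  unfolding is_kripke_def
proof (intro conjI ballI)
  show "finite (AP (tree_unfolding K))"
    using K by (simp add: tree_unfolding_def is_kripke_def)
  show "countable (W (tree_unfolding K))" by simp
  show "wI (tree_unfolding K) \<in> W (tree_unfolding K)"
    by (simp add: tree_unfolding_def)
  then show "W (tree_unfolding K) \<noteq> {}" by blast
  show "R (tree_unfolding K) \<subseteq> W (tree_unfolding K) \<times> W (tree_unfolding K)"
  proof (clarify)
    fix n n' assume "(n, n') \<in> R (tree_unfolding K)"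
    then show "n \<in> W (tree_unfolding K) \<and> n' \<in> W (tree_unfolding K)"
      by (rule R_tree_unfoldingE) (auto simp: tree_unfolding_def)
  qed
next
  fix n assume "n \<in> W (tree_unfolding K)"
  then obtain xs where xs: "n = code xs" "valid_node K xs"
    by (auto simp: tree_unfolding_def)
  obtain v where v: "(world K xs, v) \<in> R K"
    using K world_in_W unfolding is_kripke_def by blast
  then have "v \<in> W K"
    using K unfolding is_kripke_def by blast
  with v have "valid_node K ((to_nat_on (W K) v, Plain) # xs)"
    using xs K by (simp add: is_kripke_def)
  then show "\<exists>n'. (n, n') \<in> R (tree_unfolding K)"
    using xs tree_edge_in_R by blast
next
  fix n assume "n \<in> W (tree_unfolding K)"
  show "L (tree_unfolding K) n \<subseteq> AP (tree_unfolding K)"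
    using K world_in_W[OF K] unfolding tree_unfolding_def is_kripke_def by auto
qed

text \<open>A path from world K xs is lifted to the node xs by opening a loop at the first step and
  taking the back edge to xs whenever the path revisits world K xs; hence cycles lift to cycles.\<close>

fun lift :: "('a, 'w) kripke \<Rightarrow> node \<Rightarrow> (nat \<Rightarrow> 'w) \<Rightarrow> nat \<Rightarrow> node" where
  "lift K xs \<pi> 0 = xs"
| "lift K xs \<pi> (Suc t) =
     (if lift K xs \<pi> t \<noteq> xs \<and> \<pi> (Suc t) = world K xs then xs
      else (to_nat_on (W K) (\<pi> (Suc t)), if lift K xs \<pi> t = xs then Open else Inner)
             # lift K xs \<pi> t)"

lemma lift_invariant:
  assumes K: "is_kripke K" and xs: "valid_node K xs" and \<pi>: "\<pi> \<in> Pth K (world K xs)"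
  shows "valid_node K (lift K xs \<pi> t) \<and> world K (lift K xs \<pi> t) = \<pi> t \<and>
    (lift K xs \<pi> t = xs \<or> loop_origin (lift K xs \<pi> t) = Some xs)"
proof (induction t)
  case 0
  then show ?case using xs \<pi> by (simp add: Pth_def)
next
  case (Suc t)
  have "(\<pi> t, \<pi> (Suc t)) \<in> R K"
    using \<pi> by (simp add: Pth_def)
  moreover from this have "\<pi> (Suc t) \<in> W K"
    using K unfolding is_kripke_def by blast
  ultimately show ?case
    using Suc xs K by (auto simp: is_kripke_def)
qed

lemma lift_step:
  assumes "is_kripke K" and "valid_node K xs" and \<pi>: "\<pi> \<in> Pth K (world K xs)"
  shows "(code (lift K xs \<pi> t), code (lift K xs \<pi> (Suc t))) \<in> R (tree_unfolding K)"
proof (cases "lift K xs \<pi> t \<noteq> xs \<and> \<pi> (Suc t) = world K xs")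
  case True
  have "(\<pi> t, \<pi> (Suc t)) \<in> R K"
    using \<pi> by (simp add: Pth_def)
  with True have "back_target K (lift K xs \<pi> t) = Some xs"
    using lift_invariant[OF assms, of t] by (simp add: back_target_def)
  with True show ?thesis
    by (simp add: back_edge_in_R)
next
  case False
  then have "lift K xs \<pi> (Suc t) =
    (to_nat_on (W K) (\<pi> (Suc t)), if lift K xs \<pi> t = xs then Open else Inner) # lift K xs \<pi> t"
    unfolding lift.simps by (rule if_not_P)
  moreover have "valid_node K (lift K xs \<pi> (Suc t))"
    using lift_invariant[OF assms] by blast
  ultimately show ?thesis
    by (metis tree_edge_in_R)
qed

lemma lift_in_Pth:
  assumes "is_kripke K" and "valid_node K xs" and "\<pi> \<in> Pth K (world K xs)"
  shows "(\<lambda>t. code (lift K xs \<pi> t)) \<in> Pth (tree_unfolding K) (code xs)"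
  using lift_step[OF assms] by (simp add: Pth_def)

lemma lift_is_cycle:
  assumes "\<pi> \<in> Pth K (world K xs)" and "is_cycle \<pi>"
  shows "is_cycle (\<lambda>t. code (lift K xs \<pi> t))"
  unfolding is_cycle_def
proof
  fix i
  obtain j where "j > Suc i" "\<pi> j = world K xs"
    using assms unfolding is_cycle_def Pth_def by force
  then obtain j' where "j = Suc j'" "j' > i" "\<pi> (Suc j') = world K xs"
    by (cases j) auto
  then show "\<exists>j>i. code (lift K xs \<pi> j) = code (lift K xs \<pi> 0)"
    by (cases "lift K xs \<pi> j' = xs") (auto intro: exI[of _ j'] exI[of _ "Suc j'"])
qed

lemma world_lift:
  assumes "is_kripke K" and "valid_node K xs" and "\<pi> \<in> Pth K (world K xs)"
  shows "(world K \<circ> decode) \<circ> (\<lambda>t. code (lift K xs \<pi> t)) = \<pi>"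
  using lift_invariant[OF assms] by (simp add: fun_eq_iff)

lemma world_decode_edge:
  "(n, n') \<in> R (tree_unfolding K) \<Longrightarrow> ((world K \<circ> decode) n, (world K \<circ> decode) n') \<in> R K"
  by (erule R_tree_unfoldingE) simp

lemma Pth_tree_unfolding_image:
  assumes K: "is_kripke K" and n: "n \<in> W (tree_unfolding K)"
  shows "(\<circ>) (world K \<circ> decode) ` Pth (tree_unfolding K) n = Pth K (world K (decode n))"
proof (intro equalityI subsetI)
  fix \<pi> assume "\<pi> \<in> (\<circ>) (world K \<circ> decode) ` Pth (tree_unfolding K) n"
  then show "\<pi> \<in> Pth K (world K (decode n))"
    using comp_in_Pth[of "tree_unfolding K" "world K \<circ> decode" K, OF world_decode_edge]
    by fastforce
next
  obtain xs where xs: "n = code xs" "valid_node K xs"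
    using n by (auto simp: tree_unfolding_def)
  fix \<pi> assume "\<pi> \<in> Pth K (world K (decode n))"
  with xs have \<pi>: "\<pi> \<in> Pth K (world K xs)" by simp
  show "\<pi> \<in> (\<circ>) (world K \<circ> decode) ` Pth (tree_unfolding K) n"
  proof (rule image_eqI)
    show "\<pi> = (world K \<circ> decode) \<circ> (\<lambda>t. code (lift K xs \<pi> t))"
      using world_lift[OF K xs(2) \<pi>] by simp
    show "(\<lambda>t. code (lift K xs \<pi> t)) \<in> Pth (tree_unfolding K) n"
      using lift_in_Pth[OF K xs(2) \<pi>] xs(1) by simp
  qed
qed

lemma Cyc_tree_unfolding_image:
  assumes K: "is_kripke K" and n: "n \<in> W (tree_unfolding K)"
  shows "(\<circ>) (world K \<circ> decode) ` Cyc (tree_unfolding K) n = Cyc K (world K (decode n))"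
proof (intro equalityI subsetI)
  fix \<pi> assume "\<pi> \<in> (\<circ>) (world K \<circ> decode) ` Cyc (tree_unfolding K) n"
  then show "\<pi> \<in> Cyc K (world K (decode n))"
    using comp_in_Cyc[of "tree_unfolding K" "world K \<circ> decode" K, OF world_decode_edge]
    by fastforce
next
  obtain xs where xs: "n = code xs" "valid_node K xs"
    using n by (auto simp: tree_unfolding_def)
  fix \<pi> assume "\<pi> \<in> Cyc K (world K (decode n))"
  with xs have \<pi>: "\<pi> \<in> Pth K (world K xs)" "is_cycle \<pi>" by (simp_all add: Cyc_def)
  show "\<pi> \<in> (\<circ>) (world K \<circ> decode) ` Cyc (tree_unfolding K) n"
  proof (rule image_eqI)
    show "\<pi> = (world K \<circ> decode) \<circ> (\<lambda>t. code (lift K xs \<pi> t))"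
      using world_lift[OF K xs(2) \<pi>(1)] by simp
    show "(\<lambda>t. code (lift K xs \<pi> t)) \<in> Cyc (tree_unfolding K) n"
      using lift_in_Pth[OF K xs(2) \<pi>(1)] lift_is_cycle[OF \<pi>] xs(1) by (simp add: Cyc_def)
  qed
qed

theorem mainTheorem4:
  fixes \<phi> :: "'a sform" and K :: "('a, 'w) kripke"
  assumes "is_kripke K" and "models K \<phi>"
  shows "\<exists>K' :: ('a, nat) kripke. is_kripke K' \<and> tree_with_back_edges K' \<and> models K' \<phi>"
proof (intro exI conjI)
  let ?K' = "tree_unfolding K" and ?g = "world K \<circ> decode"
  show kripke: "is_kripke ?K'"
    using assms(1) by (rule is_kripke_tree_unfolding)
  show "tree_with_back_edges ?K'"
    by (rule tree_with_back_edges_tree_unfolding)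
  have "sat_s ?K' (wI ?K') \<phi> \<longleftrightarrow> sat_s K (?g (wI ?K')) \<phi>"
  proof (rule sat_invariant_under_path_surjection(1))
    show "R ?K' \<subseteq> W ?K' \<times> W ?K'" "wI ?K' \<in> W ?K'"
      using kripke by (simp_all add: is_kripke_def)
    show "L ?K' n = L K (?g n)" for n
      by (simp add: tree_unfolding_def)
    show "(\<circ>) ?g ` Pth ?K' n = Pth K (?g n)" "(\<circ>) ?g ` Cyc ?K' n = Cyc K (?g n)"
      if "n \<in> W ?K'" for n
      using Pth_tree_unfolding_image[OF assms(1) that] Cyc_tree_unfolding_image[OF assms(1) that]
      by simp_all
  qed
  then show "models ?K' \<phi>"
    using assms(2) by (simp add: models_def tree_unfolding_def)
qed

end
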